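(* Let $\omega>0$, $S^1=[0,2\pi/\omega]$ with endpoints identified, and $c$ a smooth real $2\pi/\omega$-periodic function of the form $c(t)=2\sum_{n\ge1}\left(\frac{E_n}{(in\omega)^2}e^{in\omega t}+\frac{\overline{E_n}}{(-in\omega)^2}e^{-in\omega t}\right)$. Let $K(\sigma)$ be the operator on $L^2(S^1,dt)$ defined for $\operatorname{Im}\sigma>0$ by $$K(\sigma)f(t)=\sqrt{\tfrac{i}{\pi}}\int_0^{\infty}\exp\!\left(i\frac{(c(t)-c(t-s))^2}{4s}\right)e^{i\sigma s}f(t-s)\frac{ds}{\sqrt{s}}$$ (and by analytic continuation in the strip $0<\operatorname{Re}\sigma<\omega$). Then $K(\sigma)$ vanishes (in operator norm) as $\operatorname{Im}\sigma\to+\infty$.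
   Context: Functions on $S^1$ are extended periodically to $\mathbb{R}$. *)

theory Defs
  imports "HOL-Analysis.Analysis"
begin

definition smooth_real :: "(real \<Rightarrow> real) \<Rightarrow> bool" where
  "smooth_real c \<longleftrightarrow> (\<exists>D :: nat \<Rightarrow> real \<Rightarrow> real. D 0 = c \<and>
      (\<forall>k t. (D k has_real_derivative D (Suc k) t) (at t)))"

text \<open>Elements of L^2(S^1): measurable functions on the real line, periodic with period T
  (the periodic extension of a function on S^1), square integrable over one period.\<close>
definition L2_per :: "real \<Rightarrow> (real \<Rightarrow> complex) set" where
  "L2_per T = {f. f \<in> borel_measurable lborel \<and> (\<forall>t. f (t + T) = f t) \<and>
      set_integrable lborel {0..T} (\<lambda>t. (cmod (f t))\<^sup>2)}"

definition L2_norm_sq :: "real \<Rightarrow> (real \<Rightarrow> complex) \<Rightarrow> real" where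
  "L2_norm_sq T f = (LINT t:{0..T}|lborel. (cmod (f t))\<^sup>2)"

definition K_integrand :: "(real \<Rightarrow> real) \<Rightarrow> complex \<Rightarrow> (real \<Rightarrow> complex) \<Rightarrow> real \<Rightarrow> real \<Rightarrow> complex" where
  "K_integrand c \<sigma> f t s =
     exp (\<i> * of_real ((c t - c (t - s))\<^sup>2 / (4 * s))) * exp (\<i> * \<sigma> * of_real s)
       * f (t - s) / of_real (sqrt s)"

definition K_op :: "(real \<Rightarrow> real) \<Rightarrow> complex \<Rightarrow> (real \<Rightarrow> complex) \<Rightarrow> real \<Rightarrow> complex" where
  "K_op c \<sigma> f t = csqrt (\<i> / of_real pi) * (LINT s:{0<..}|lborel. K_integrand c \<sigma> f t s)"

end

theory Submission
  imports Defs
begin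

text \<open>
  The phase factor \<open>exp (\<i> (c t - c (t - s))\<^sup>2 / (4 s))\<close> has modulus one, so with \<open>y = Im \<sigma>\<close>
  the modulus of \<open>K(\<sigma>) f\<close> is at most \<open>(g * |f|) / \<surd>\<pi>\<close>, where \<open>g s = exp (- y s) / \<surd>s\<close>
  for \<open>s > 0\<close> and \<open>*\<close> is convolution. Young's inequality on the circle (Cauchy-Schwarz
  against the measure \<open>g s ds\<close>, then Fubini and translation invariance of the integral over a
  period) gives \<open>\<parallel>g * |f|\<parallel> \<le> \<parallel>g\<parallel>\<^sub>1 \<parallel>f\<parallel>\<close>, and \<open>\<parallel>g\<parallel>\<^sub>1 = \<Gamma>(1/2) / \<surd>y = \<surd>(\<pi> / y)\<close>.
  Hence \<open>\<parallel>K(\<sigma>) f\<parallel>\<^sup>2 \<le> \<parallel>f\<parallel>\<^sup>2 / Im \<sigma>\<close>.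
\<close>

lemma nn_integral_lborel_translate:
  fixes u :: "real \<Rightarrow> ennreal"
  assumes [measurable]: "u \<in> borel_measurable borel"
  shows "(\<integral>\<^sup>+x. u x \<partial>lborel) = (\<integral>\<^sup>+x. u (x + b) \<partial>lborel)"
  using nn_integral_real_affine[OF assms, of 1 b] by (simp add: add.commute)

lemma nn_integral_periodic_shift:
  fixes h :: "real \<Rightarrow> ennreal"
  assumes [measurable]: "h \<in> borel_measurable borel"
    and per: "\<And>t. h (t + T) = h t" and T: "T > 0"
  shows "(\<integral>\<^sup>+x\<in>{a..a+T}. h x \<partial>lborel) = (\<integral>\<^sup>+x\<in>{0..T}. h x \<partial>lborel)"
proof -
  have closed_eq: "(\<integral>\<^sup>+x\<in>{b..b+T}. h x \<partial>lborel) = (\<integral>\<^sup>+x\<in>{b..<b+T}. h x \<partial>lborel)" for b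
    by (intro nn_integral_cong_AE)
       (use AE_lborel_singleton[of "b + T"] in eventually_elim, auto simp: indicator_def)
  have shift: "(\<integral>\<^sup>+x\<in>{b..<b'}. h x \<partial>lborel) = (\<integral>\<^sup>+x\<in>{b-d..<b'-d}. h x \<partial>lborel)"
    if "\<And>x. h (x + d) = h x" for b b' d
  proof -
    have "(\<integral>\<^sup>+x\<in>{b..<b'}. h x \<partial>lborel) = (\<integral>\<^sup>+x. h (x + d) * indicator {b..<b'} (x + d) \<partial>lborel)"
      by (rule nn_integral_lborel_translate) measurable
    also have "\<dots> = (\<integral>\<^sup>+x\<in>{b-d..<b'-d}. h x \<partial>lborel)"
      by (intro nn_integral_cong) (auto simp: that indicator_def)
    finally show ?thesis .
  qed
  \<comment> \<open>Reduce \<open>a\<close> modulo \<open>T\<close> to \<open>r \<in> [0, T)\<close>, then move the part of \<open>[r, r + T)\<close> beyond \<open>T\<close> back by one period.\<close>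
  define k where "k = \<lfloor>a / T\<rfloor>"
  define r where "r = a - of_int k * T"
  have r: "0 \<le> r" "r < T"
    using floor_divide_lower[OF T, of a] floor_divide_upper[OF T, of a]
    unfolding r_def k_def by (simp_all add: algebra_simps)
  interpret periodic_fun_simple h T by standard (rule per)
  have "(\<integral>\<^sup>+x\<in>{a..<a+T}. h x \<partial>lborel) = (\<integral>\<^sup>+x\<in>{r..<r+T}. h x \<partial>lborel)"
    using shift[of "of_int k * T" a "a + T", OF plus_of_int] by (simp add: r_def algebra_simps)
  also have "\<dots> = (\<integral>\<^sup>+x\<in>{r..<T} \<union> {T..<T+r}. h x \<partial>lborel)"
    using r by (simp add: ivl_disj_un add.commute)
  also have "\<dots> = (\<integral>\<^sup>+x\<in>{r..<T}. h x \<partial>lborel) + (\<integral>\<^sup>+x\<in>{T..<T+r}. h x \<partial>lborel)"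
    by (rule nn_integral_disjoint_pair) auto
  also have "(\<integral>\<^sup>+x\<in>{T..<T+r}. h x \<partial>lborel) = (\<integral>\<^sup>+x\<in>{0..<r}. h x \<partial>lborel)"
    using shift[of T T "T + r", OF per] by simp
  also have "(\<integral>\<^sup>+x\<in>{r..<T}. h x \<partial>lborel) + \<dots> = (\<integral>\<^sup>+x\<in>{0..<r} \<union> {r..<T}. h x \<partial>lborel)"
    by (subst nn_integral_disjoint_pair) (auto simp: add.commute)
  also have "{0..<r} \<union> {r..<T} = {0..<0+T}"
    using r by (simp add: ivl_disj_un)
  finally show ?thesis
    using closed_eq[of a] closed_eq[of 0] by simp
qed

lemma has_integral_exp_neg_over_sqrt: "((\<lambda>x. exp (- x) / sqrt x) has_integral sqrt pi) {0<..}"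
proof -
  have Gamma: "((\<lambda>x. x powr (1/2 - 1) / exp x) has_integral sqrt pi) {0..}"
    using Gamma_integral_real[of "1/2"] by (simp add: Gamma_one_half_real)
  have "((\<lambda>x. exp (- x) / sqrt x) has_integral sqrt pi) {0..}"
  proof (rule has_integral_spike_finite[OF _ _ Gamma])
    show "exp (- x) / sqrt x = x powr (1/2 - 1) / exp x" if "x \<in> {0..} - {0}" for x
      using that by (simp add: powr_minus_divide powr_half_sqrt exp_minus inverse_eq_divide mult.commute)
  qed simp
  moreover have "negligible {x \<in> {0<..} - {0..}. exp (- x) / sqrt x \<noteq> (0::real)}"
    by (rule negligible_subset[of "{}"]) auto
  moreover have "negligible {x \<in> {0..} - {0<..}. exp (- x) / sqrt x \<noteq> (0::real)}"
    by (rule negligible_subset[of "{0}"]) auto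
  ultimately show ?thesis
    using has_integral_spike_set_eq[where f="\<lambda>x. exp (- x) / sqrt x" and S="{0<..}" and T="{0..}"] by blast
qed

lemma nn_integral_weighted_Cauchy_Schwarz:
  fixes g h :: "'a \<Rightarrow> real"
  assumes [measurable]: "g \<in> borel_measurable M" "h \<in> borel_measurable M"
    and g: "\<And>x. g x \<ge> 0" and h: "\<And>x. h x \<ge> 0"
  shows "(\<integral>\<^sup>+x. ennreal (g x * h x) \<partial>M)\<^sup>2
    \<le> (\<integral>\<^sup>+x. ennreal (g x) \<partial>M) * (\<integral>\<^sup>+x. ennreal (g x * (h x)\<^sup>2) \<partial>M)"
proof -
  have "(\<integral>\<^sup>+x. ennreal (g x * h x) \<partial>M)
      = (\<integral>\<^sup>+x. ennreal (sqrt (g x)) * ennreal (sqrt (g x) * h x) \<partial>M)"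
    using g h by (intro nn_integral_cong) (simp add: mult.assoc[symmetric] flip: ennreal_mult)
  also have "\<dots>\<^sup>2 \<le> (\<integral>\<^sup>+x. ennreal (sqrt (g x)) ^ 2 \<partial>M) * (\<integral>\<^sup>+x. ennreal (sqrt (g x) * h x) ^ 2 \<partial>M)"
    by (rule Cauchy_Schwarz_nn_integral) measurable
  also have "(\<integral>\<^sup>+x. ennreal (sqrt (g x)) ^ 2 \<partial>M) = (\<integral>\<^sup>+x. ennreal (g x) \<partial>M)"
    using g by (simp add: ennreal_power)
  also have "(\<integral>\<^sup>+x. ennreal (sqrt (g x) * h x) ^ 2 \<partial>M) = (\<integral>\<^sup>+x. ennreal (g x * (h x)\<^sup>2) \<partial>M)"
    using g h by (simp add: ennreal_power power_mult_distrib)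
  finally show ?thesis .
qed

lemma nn_integral_periodic_convolution:
  fixes g u :: "real \<Rightarrow> ennreal"
  assumes [measurable]: "g \<in> borel_measurable borel" "u \<in> borel_measurable borel"
    and per: "\<And>t. u (t + T) = u t" and T: "T > 0"
  shows "(\<integral>\<^sup>+t\<in>{0..T}. (\<integral>\<^sup>+s. g s * u (t - s) \<partial>lborel) \<partial>lborel)
    = (\<integral>\<^sup>+s. g s \<partial>lborel) * (\<integral>\<^sup>+t\<in>{0..T}. u t \<partial>lborel)"
proof -
  have shifted_period: "(\<integral>\<^sup>+t\<in>{0..T}. u (t - s) \<partial>lborel) = (\<integral>\<^sup>+t\<in>{0..T}. u t \<partial>lborel)" for s
  proof -
    have "(\<integral>\<^sup>+t\<in>{0..T}. u (t - s) \<partial>lborel) = (\<integral>\<^sup>+t. u t * indicator {0..T} (t + s) \<partial>lborel)"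
      by (subst nn_integral_lborel_translate[where b = s]) auto
    also have "\<dots> = (\<integral>\<^sup>+t\<in>{-s..-s+T}. u t \<partial>lborel)"
      by (intro nn_integral_cong) (auto simp: indicator_def)
    also have "\<dots> = (\<integral>\<^sup>+t\<in>{0..T}. u t \<partial>lborel)"
      using per T by (intro nn_integral_periodic_shift) measurable
    finally show ?thesis .
  qed
  have "(\<integral>\<^sup>+t\<in>{0..T}. (\<integral>\<^sup>+s. g s * u (t - s) \<partial>lborel) \<partial>lborel)
      = (\<integral>\<^sup>+t. (\<integral>\<^sup>+s. g s * (u (t - s) * indicator {0..T} t) \<partial>lborel) \<partial>lborel)"
    by (subst nn_integral_multc[symmetric]) (auto simp: mult.assoc)
  also have "\<dots> = (\<integral>\<^sup>+s. (\<integral>\<^sup>+t. g s * (u (t - s) * indicator {0..T} t) \<partial>lborel) \<partial>lborel)"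
    by (rule lborel_pair.Fubini'[symmetric]) measurable
  also have "\<dots> = (\<integral>\<^sup>+s. g s * (\<integral>\<^sup>+t\<in>{0..T}. u t \<partial>lborel) \<partial>lborel)"
    by (intro nn_integral_cong) (simp add: nn_integral_cmult shifted_period)
  also have "\<dots> = (\<integral>\<^sup>+s. g s \<partial>lborel) * (\<integral>\<^sup>+t\<in>{0..T}. u t \<partial>lborel)"
    by (rule nn_integral_multc) measurable
  finally show ?thesis .
qed

lemma nn_integral_periodic_convolution_square_le:
  fixes g h :: "real \<Rightarrow> real"
  assumes [measurable]: "g \<in> borel_measurable borel" "h \<in> borel_measurable borel"
    and g: "\<And>s. g s \<ge> 0" and h: "\<And>t. h t \<ge> 0"
    and per: "\<And>t. h (t + T) = h t" and T: "T > 0"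
  shows "(\<integral>\<^sup>+t\<in>{0..T}. (\<integral>\<^sup>+s. ennreal (g s * h (t - s)) \<partial>lborel)\<^sup>2 \<partial>lborel)
    \<le> (\<integral>\<^sup>+s. ennreal (g s) \<partial>lborel)\<^sup>2 * (\<integral>\<^sup>+t\<in>{0..T}. ennreal ((h t)\<^sup>2) \<partial>lborel)"
proof -
  let ?C = "\<integral>\<^sup>+s. ennreal (g s) \<partial>lborel"
  have pointwise: "(\<integral>\<^sup>+s. ennreal (g s * h (t - s)) \<partial>lborel)\<^sup>2
      \<le> ?C * (\<integral>\<^sup>+s. ennreal (g s) * ennreal ((h (t - s))\<^sup>2) \<partial>lborel)" for t
    using nn_integral_weighted_Cauchy_Schwarz[of g lborel "\<lambda>s. h (t - s)"] g h
    by (simp add: ennreal_mult)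
  have "(\<integral>\<^sup>+t\<in>{0..T}. (\<integral>\<^sup>+s. ennreal (g s * h (t - s)) \<partial>lborel)\<^sup>2 \<partial>lborel)
      \<le> (\<integral>\<^sup>+t\<in>{0..T}. ?C * (\<integral>\<^sup>+s. ennreal (g s) * ennreal ((h (t - s))\<^sup>2) \<partial>lborel) \<partial>lborel)"
    by (intro nn_integral_mono mult_right_mono pointwise) simp
  also have "\<dots> = ?C * (\<integral>\<^sup>+t\<in>{0..T}. (\<integral>\<^sup>+s. ennreal (g s) * ennreal ((h (t - s))\<^sup>2) \<partial>lborel) \<partial>lborel)"
    by (subst nn_integral_cmult[symmetric]) (auto simp: mult.assoc)
  also have "\<dots> = ?C * (?C * (\<integral>\<^sup>+t\<in>{0..T}. ennreal ((h t)\<^sup>2) \<partial>lborel))"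
    using per T by (subst nn_integral_periodic_convolution) auto
  finally show ?thesis
    by (simp add: power2_eq_square mult.assoc)
qed

lemma AE_finite_if_periodic_nn_integral_finite:
  fixes h :: "real \<Rightarrow> ennreal"
  assumes [measurable]: "h \<in> borel_measurable borel"
    and per: "\<And>t. h (t + T) = h t" and T: "T > 0"
    and finite: "(\<integral>\<^sup>+t\<in>{0..T}. h t \<partial>lborel) < \<infinity>"
  shows "AE t in lborel. h t < \<infinity>"
proof -
  have "AE t in lborel. t \<in> {a..a+T} \<longrightarrow> h t < \<infinity>" for a
  proof -
    have "(\<integral>\<^sup>+t\<in>{a..a+T}. h t \<partial>lborel) \<noteq> \<infinity>"
      using finite per T by (subst nn_integral_periodic_shift) auto
    then have "AE t in lborel. h t * indicator {a..a+T} t \<noteq> \<infinity>"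
      by (intro nn_integral_PInf_AE) measurable
    then show ?thesis
      by eventually_elim (auto simp: indicator_def top.not_eq_extremum)
  qed
  then have "AE t in lborel. \<forall>k\<in>(UNIV :: int set). t \<in> {k*T..k*T+T} \<longrightarrow> h t < \<infinity>"
    by (subst AE_ball_countable) auto
  then show ?thesis
  proof eventually_elim
    case (elim t)
    have "t \<in> {\<lfloor>t/T\<rfloor>*T..\<lfloor>t/T\<rfloor>*T+T}"
      using floor_divide_lower[OF T, of t] floor_divide_upper[OF T, of t] by (simp add: algebra_simps)
    with elim show ?case by blast
  qed
qed

lemma L2_norm_sq_nonneg: "L2_norm_sq T f \<ge> 0"
  unfolding L2_norm_sq_def set_lebesgue_integral_def
  by (rule Bochner_Integration.integral_nonneg) (simp add: indicator_def)

lemma ennreal_L2_norm_sq: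
  assumes "set_integrable lborel {0..T} (\<lambda>t. (cmod (f t))\<^sup>2)"
  shows "ennreal (L2_norm_sq T f) = (\<integral>\<^sup>+t\<in>{0..T}. ennreal ((cmod (f t))\<^sup>2) \<partial>lborel)"
proof -
  have "ennreal (L2_norm_sq T f) = (\<integral>\<^sup>+t. ennreal (indicator {0..T} t *\<^sub>R (cmod (f t))\<^sup>2) \<partial>lborel)"
    unfolding L2_norm_sq_def set_lebesgue_integral_def
    using assms by (intro nn_integral_eq_integral[symmetric]) (auto simp: set_integrable_def)
  also have "\<dots> = (\<integral>\<^sup>+t\<in>{0..T}. ennreal ((cmod (f t))\<^sup>2) \<partial>lborel)"
    by (intro nn_integral_cong) (simp add: indicator_def)
  finally show ?thesis .
qed

lemma L2_per_norm_sq_le: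
  assumes "f \<in> borel_measurable borel" and "\<And>t. f (t + T) = f t" and "r \<ge> 0"
    and bound: "(\<integral>\<^sup>+t\<in>{0..T}. ennreal ((cmod (f t))\<^sup>2) \<partial>lborel) \<le> ennreal r"
  shows "f \<in> L2_per T \<and> L2_norm_sq T f \<le> r"
proof
  have "(\<integral>\<^sup>+t. ennreal (norm (indicator {0..T} t *\<^sub>R (cmod (f t))\<^sup>2)) \<partial>lborel)
      = (\<integral>\<^sup>+t\<in>{0..T}. ennreal ((cmod (f t))\<^sup>2) \<partial>lborel)"
    by (intro nn_integral_cong) (simp add: indicator_def)
  also have "\<dots> < \<infinity>"
    using bound by (simp add: le_less_trans)
  finally have integrable: "set_integrable lborel {0..T} (\<lambda>t. (cmod (f t))\<^sup>2)"
    unfolding set_integrable_def integrable_iff_bounded using assms(1) by simp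
  then show "f \<in> L2_per T"
    using assms(1,2) unfolding L2_per_def by simp
  show "L2_norm_sq T f \<le> r"
    using bound assms(3) by (simp add: ennreal_L2_norm_sq[OF integrable, symmetric])
qed

definition damped_kernel :: "real \<Rightarrow> real \<Rightarrow> real" where
  "damped_kernel y s = indicator {0<..} s * (exp (- y * s) / sqrt s)"

lemma damped_kernel_nonneg: "damped_kernel y s \<ge> 0"
  by (simp add: damped_kernel_def indicator_def)

lemma damped_kernel_measurable [measurable]: "damped_kernel y \<in> borel_measurable borel"
  unfolding damped_kernel_def by measurable

lemma nn_integral_damped_kernel:
  assumes y: "y > 0"
  shows "(\<integral>\<^sup>+s. ennreal (damped_kernel y s) \<partial>lborel) = ennreal (sqrt (pi / y))"
proof -
  have "(\<integral>\<^sup>+s. ennreal (damped_kernel y s) \<partial>lborel)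
      = ennreal (1 / y) * (\<integral>\<^sup>+x. ennreal (damped_kernel y (x / y)) \<partial>lborel)"
    using nn_integral_real_affine[of "\<lambda>s. ennreal (damped_kernel y s)" "1 / y" 0] y by simp
  also have "(\<integral>\<^sup>+x. ennreal (damped_kernel y (x / y)) \<partial>lborel)
      = (\<integral>\<^sup>+x. ennreal (sqrt y) * (ennreal (exp (- x) / sqrt x) * indicator {0<..} x) \<partial>lborel)"
  proof (intro nn_integral_cong)
    fix x :: real
    have "exp (- y * (x / y)) / sqrt (x / y) = sqrt y * (exp (- x) / sqrt x)"
      using y by (simp add: real_sqrt_divide)
    then show "ennreal (damped_kernel y (x / y))
        = ennreal (sqrt y) * (ennreal (exp (- x) / sqrt x) * indicator {0<..} x)"
      using y by (simp add: damped_kernel_def indicator_def zero_less_divide_iff flip: ennreal_mult)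
  qed
  also have "\<dots> = ennreal (sqrt y) * ennreal (sqrt pi)"
    using nn_integral_has_integral_lebesgue'[OF _ has_integral_exp_neg_over_sqrt]
    by (simp add: nn_integral_cmult)
  also have "ennreal (1 / y) * (ennreal (sqrt y) * ennreal (sqrt pi)) = ennreal (sqrt (pi / y))"
  proof -
    have "1 / y * (sqrt y * sqrt pi) = sqrt (pi / y)"
      using y by (simp add: real_sqrt_divide divide_simps real_sqrt_mult)
    then show ?thesis
      using y by (simp flip: ennreal_mult)
  qed
  finally show ?thesis .
qed

lemma nn_integral_damped_convolution_square_le:
  assumes T: "T > 0" and y: "y > 0" and f: "f \<in> L2_per T"
  shows "(\<integral>\<^sup>+t\<in>{0..T}. (\<integral>\<^sup>+s. ennreal (damped_kernel y s * cmod (f (t - s))) \<partial>lborel)\<^sup>2 \<partial>lborel)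
    \<le> ennreal (pi / y) * ennreal (L2_norm_sq T f)"
proof -
  have [measurable]: "f \<in> borel_measurable borel" and f_per: "\<And>t. f (t + T) = f t"
    and f_int: "set_integrable lborel {0..T} (\<lambda>t. (cmod (f t))\<^sup>2)"
    using f unfolding L2_per_def by auto
  have "(\<integral>\<^sup>+t\<in>{0..T}. (\<integral>\<^sup>+s. ennreal (damped_kernel y s * cmod (f (t - s))) \<partial>lborel)\<^sup>2 \<partial>lborel)
      \<le> (\<integral>\<^sup>+s. ennreal (damped_kernel y s) \<partial>lborel)\<^sup>2
        * (\<integral>\<^sup>+t\<in>{0..T}. ennreal ((cmod (f t))\<^sup>2) \<partial>lborel)"
    using f_per T by (intro nn_integral_periodic_convolution_square_le) (auto simp: damped_kernel_nonneg)
  also have "\<dots> = ennreal (pi / y) * ennreal (L2_norm_sq T f)"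
    using y by (simp add: nn_integral_damped_kernel ennreal_L2_norm_sq[OF f_int] ennreal_power)
  finally show ?thesis .
qed

lemma nn_integral_norm_K_integrand:
  "(\<integral>\<^sup>+s\<in>{0<..}. ennreal (norm (K_integrand c \<sigma> f t s)) \<partial>lborel)
    = (\<integral>\<^sup>+s. ennreal (damped_kernel (Im \<sigma>) s * cmod (f (t - s))) \<partial>lborel)"
  by (intro nn_integral_cong)
    (simp add: K_integrand_def damped_kernel_def indicator_def norm_mult norm_divide)

lemma K_op_measurable [measurable]:
  assumes [measurable]: "c \<in> borel_measurable borel" "f \<in> borel_measurable borel"
  shows "K_op c \<sigma> f \<in> borel_measurable borel"
  unfolding K_op_def set_lebesgue_integral_def K_integrand_def by measurable

lemma K_op_periodic:
  assumes "\<And>t. c (t + T) = c t" and "\<And>t. f (t + T) = f t"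
  shows "K_op c \<sigma> f (t + T) = K_op c \<sigma> f t"
proof -
  have "c (t + T - s) = c (t - s)" "f (t + T - s) = f (t - s)" for s
    using assms[of "t - s"] by (simp_all add: algebra_simps)
  then show ?thesis
    unfolding K_op_def K_integrand_def by (simp add: assms)
qed

lemma norm_K_op_sq_le:
  "ennreal ((cmod (K_op c \<sigma> f t))\<^sup>2)
    \<le> ennreal (1 / pi) * (\<integral>\<^sup>+s\<in>{0<..}. ennreal (norm (K_integrand c \<sigma> f t s)) \<partial>lborel)\<^sup>2"
proof -
  define I where "I = (LINT s:{0<..}|lborel. K_integrand c \<sigma> f t s)"
  have "ennreal (norm I) \<le> (\<integral>\<^sup>+s\<in>{0<..}. ennreal (norm (K_integrand c \<sigma> f t s)) \<partial>lborel)"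
  proof (cases "set_integrable lborel {0<..} (K_integrand c \<sigma> f t)")
    case True
    then have "ennreal (norm I)
        \<le> (\<integral>\<^sup>+s. ennreal (norm (indicator {0<..} s *\<^sub>R K_integrand c \<sigma> f t s)) \<partial>lborel)"
      unfolding I_def set_lebesgue_integral_def set_integrable_def by (rule integral_norm_bound_ennreal)
    also have "\<dots> = (\<integral>\<^sup>+s\<in>{0<..}. ennreal (norm (K_integrand c \<sigma> f t s)) \<partial>lborel)"
      by (intro nn_integral_cong) (simp add: indicator_def)
    finally show ?thesis .
  next
    case False
    \<comment> \<open>The Bochner integral of a non-integrable function is \<open>0\<close>.\<close>
    then show ?thesis
      by (simp add: I_def set_lebesgue_integral_def set_integrable_def not_integrable_integral_eq)
  qed
  moreover have "(cmod (K_op c \<sigma> f t))\<^sup>2 = 1 / pi * (norm I)\<^sup>2"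
    unfolding K_op_def I_def by (simp add: norm_mult norm_divide power_mult_distrib)
  then have "ennreal ((cmod (K_op c \<sigma> f t))\<^sup>2) = ennreal (1 / pi) * ennreal (norm I) ^ 2"
    by (simp only: ennreal_mult ennreal_power norm_ge_zero zero_le_power pi_ge_zero divide_nonneg_nonneg
        zero_le_one)
  ultimately show ?thesis
    by (simp add: mult_left_mono power_mono)
qed

lemma AE_set_integrable_K_integrand:
  assumes T: "T > 0" and y: "Im \<sigma> > 0"
    and [measurable]: "c \<in> borel_measurable borel" and f: "f \<in> L2_per T"
  shows "AE t in lborel. set_integrable lborel {0<..} (K_integrand c \<sigma> f t)"
proof -
  have [measurable]: "f \<in> borel_measurable borel" and f_per: "\<And>t. f (t + T) = f t"
    using f unfolding L2_per_def by auto
  define A where "A t = (\<integral>\<^sup>+s. ennreal (damped_kernel (Im \<sigma>) s * cmod (f (t - s))) \<partial>lborel)" for t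
  have [measurable]: "A \<in> borel_measurable borel"
    unfolding A_def by measurable
  have "A (t + T) = A t" for t
    using f_per[of "t - s" for s] unfolding A_def by (simp add: algebra_simps)
  moreover have "(\<integral>\<^sup>+t\<in>{0..T}. (A t)\<^sup>2 \<partial>lborel) < \<infinity>"
    using nn_integral_damped_convolution_square_le[OF T y f] unfolding A_def
    by (auto simp: le_less_trans ennreal_mult_less_top)
  ultimately have "AE t in lborel. (A t)\<^sup>2 < \<infinity>"
    using T by (intro AE_finite_if_periodic_nn_integral_finite) auto
  then show ?thesis
  proof eventually_elim
    case (elim t)
    have "(\<integral>\<^sup>+s. ennreal (norm (indicator {0<..} s *\<^sub>R K_integrand c \<sigma> f t s)) \<partial>lborel) = A t"
      unfolding A_def nn_integral_norm_K_integrand[of c \<sigma> f t, symmetric]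
      by (intro nn_integral_cong) (simp add: indicator_def)
    moreover have "(\<lambda>s. indicator {0<..} s *\<^sub>R K_integrand c \<sigma> f t s) \<in> borel_measurable lborel"
      unfolding K_integrand_def by measurable
    ultimately show ?case
      using elim unfolding set_integrable_def integrable_iff_bounded by (simp add: power_less_top_ennreal)
  qed
qed

lemma nn_integral_K_op_sq_le:
  assumes T: "T > 0" and y: "Im \<sigma> > 0" and f: "f \<in> L2_per T"
  shows "(\<integral>\<^sup>+t\<in>{0..T}. ennreal ((cmod (K_op c \<sigma> f t))\<^sup>2) \<partial>lborel) \<le> ennreal (L2_norm_sq T f / Im \<sigma>)"
proof -
  have [measurable]: "f \<in> borel_measurable borel"
    using f unfolding L2_per_def by auto
  let ?A = "\<lambda>t. \<integral>\<^sup>+s. ennreal (damped_kernel (Im \<sigma>) s * cmod (f (t - s))) \<partial>lborel"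
  have "(\<integral>\<^sup>+t\<in>{0..T}. ennreal ((cmod (K_op c \<sigma> f t))\<^sup>2) \<partial>lborel)
      \<le> (\<integral>\<^sup>+t\<in>{0..T}. ennreal (1 / pi) * (?A t)\<^sup>2 \<partial>lborel)"
    using norm_K_op_sq_le[of c \<sigma> f]
    by (intro nn_integral_mono mult_right_mono) (simp_all add: nn_integral_norm_K_integrand)
  also have "\<dots> = ennreal (1 / pi) * (\<integral>\<^sup>+t\<in>{0..T}. (?A t)\<^sup>2 \<partial>lborel)"
    by (subst nn_integral_cmult[symmetric]) (auto simp: mult.assoc)
  also have "\<dots> \<le> ennreal (1 / pi) * (ennreal (pi / Im \<sigma>) * ennreal (L2_norm_sq T f))"
    by (intro mult_left_mono nn_integral_damped_convolution_square_le T y f) simp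
  also have "\<dots> = ennreal (L2_norm_sq T f / Im \<sigma>)"
    using y L2_norm_sq_nonneg[of T f] by (simp flip: ennreal_mult)
  finally show ?thesis .
qed

lemma K_op_L2_bound:
  assumes T: "T > 0" and y: "Im \<sigma> > 0"
    and c_meas [measurable]: "c \<in> borel_measurable borel" and c_per: "\<And>t. c (t + T) = c t"
    and f: "f \<in> L2_per T"
  shows "(AE t in lborel. set_integrable lborel {0<..} (K_integrand c \<sigma> f t))
    \<and> K_op c \<sigma> f \<in> L2_per T \<and> L2_norm_sq T (K_op c \<sigma> f) \<le> L2_norm_sq T f / Im \<sigma>"
proof -
  have [measurable]: "f \<in> borel_measurable borel" and f_per: "\<And>t. f (t + T) = f t"
    using f unfolding L2_per_def by auto
  have "K_op c \<sigma> f \<in> L2_per T \<and> L2_norm_sq T (K_op c \<sigma> f) \<le> L2_norm_sq T f / Im \<sigma>"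
    using nn_integral_K_op_sq_le[OF T y f] y L2_norm_sq_nonneg[of T f]
    by (intro L2_per_norm_sq_le K_op_periodic c_per f_per) auto
  with AE_set_integrable_K_integrand[OF T y c_meas f] show ?thesis
    by simp
qed

lemma smooth_real_borel_measurable:
  assumes "smooth_real c"
  shows "c \<in> borel_measurable borel"
proof -
  obtain D :: "nat \<Rightarrow> real \<Rightarrow> real" where "D 0 = c" and "\<And>t. (D 0 has_real_derivative D (Suc 0) t) (at t)"
    using assms unfolding smooth_real_def by auto
  then have "continuous_on UNIV c"
    by (metis DERIV_isCont continuous_at_imp_continuous_on)
  then show ?thesis
    by (rule borel_measurable_continuous_onI)
qed

theorem proposition8:
  fixes \<omega> :: real and c :: "real \<Rightarrow> real" and E :: "nat \<Rightarrow> complex"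
  assumes "\<omega> > 0"
    and "smooth_real c"
    and "\<And>t. c (t + 2 * pi / \<omega>) = c t"
    and "\<And>t. (\<lambda>n. E (Suc n) / (\<i> * of_nat (Suc n) * of_real \<omega>)\<^sup>2
                        * exp (\<i> * of_nat (Suc n) * of_real \<omega> * of_real t)
                    + cnj (E (Suc n)) / (- \<i> * of_nat (Suc n) * of_real \<omega>)\<^sup>2
                        * exp (- \<i> * of_nat (Suc n) * of_real \<omega> * of_real t))
              sums (of_real (c t) / 2)"
  shows "\<forall>\<epsilon>>0. \<exists>M>0. \<forall>\<sigma>. Im \<sigma> > M \<longrightarrow>
           (\<forall>f \<in> L2_per (2 * pi / \<omega>).
              (AE t in lborel. set_integrable lborel {0<..} (K_integrand c \<sigma> f t))
              \<and> K_op c \<sigma> f \<in> L2_per (2 * pi / \<omega>)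
              \<and> L2_norm_sq (2 * pi / \<omega>) (K_op c \<sigma> f) \<le> \<epsilon>\<^sup>2 * L2_norm_sq (2 * pi / \<omega>) f)"
proof (intro allI impI)
  fix \<epsilon> :: real
  assume \<epsilon>: "\<epsilon> > 0"
  define T where "T = 2 * pi / \<omega>"
  have T: "T > 0"
    using assms(1) unfolding T_def by simp
  have c_meas: "c \<in> borel_measurable borel"
    using assms(2) by (rule smooth_real_borel_measurable)
  show "\<exists>M>0. \<forall>\<sigma>. Im \<sigma> > M \<longrightarrow> (\<forall>f \<in> L2_per T.
      (AE t in lborel. set_integrable lborel {0<..} (K_integrand c \<sigma> f t))
      \<and> K_op c \<sigma> f \<in> L2_per T \<and> L2_norm_sq T (K_op c \<sigma> f) \<le> \<epsilon>\<^sup>2 * L2_norm_sq T f)"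
  proof (intro exI[of _ "1 / \<epsilon>\<^sup>2"] conjI allI impI ballI)
    fix \<sigma> :: complex and f
    assume \<sigma>: "Im \<sigma> > 1 / \<epsilon>\<^sup>2" and f: "f \<in> L2_per T"
    have y: "Im \<sigma> > 0"
      by (rule less_trans[OF _ \<sigma>]) (use \<epsilon> in simp)
    have "1 / Im \<sigma> \<le> \<epsilon>\<^sup>2"
      using \<sigma> \<epsilon> y by (simp add: field_simps)
    then have "L2_norm_sq T f / Im \<sigma> \<le> \<epsilon>\<^sup>2 * L2_norm_sq T f"
      using L2_norm_sq_nonneg[of T f] by (metis mult_right_mono times_divide_eq_left mult_1)
    then show "AE t in lborel. set_integrable lborel {0<..} (K_integrand c \<sigma> f t)"
      "K_op c \<sigma> f \<in> L2_per T" "L2_norm_sq T (K_op c \<sigma> f) \<le> \<epsilon>\<^sup>2 * L2_norm_sq T f"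
      using K_op_L2_bound[OF T y c_meas _ f] assms(3) unfolding T_def by auto
  qed (use \<epsilon> in simp)
qed

end
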